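(* Let $A$ and $B$ be rings, $f: A\to B$ an injective ring homomorphism and $J$ a proper ideal of $B$. (i) If $f(A)\cap J=\{0\}$, then $A\bowtie^{f}J$ is a weak Armendariz ring if and only if $f(A)+J$ is a weak Armendariz ring. (ii) If $J\subseteq\mathrm{nil}(B)$ and $f(A)+J$ is a weak Armendariz ring, then $A\bowtie^{f}J$ is a weak Armendariz ring.
   Context: All rings are associative with identity (not necessarily commutative), ring homomorphisms are unital, and ideals are two-sided. $\mathrm{nil}(R)$ denotes the set of nilpotent elements of a ring $R$. For a ring homomorphism $f:A\to B$ and an ideal $J$ of $B$, the amalgamation is the subring $A\bowtie^{f}J=\{(a,f(a)+j)\mid a\in A,\ j\in J\}$ of $A\times B$; $f(A)+J=\{f(a)+j: a\in A, j\in J\}$ is a subring of $B$. A ring $R$ is weak Armendariz if whenever $p(x)=\sum_{i=0}^n a_ix^i$ and $q(x)=\sum_{j=0}^m b_jx^j$ in $R[x]$ satisfy $p(x)q(x)=0$, then $a_ib_j\in\mathrm{nil}(R)$ for all $i,j$. *)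

theory Defs
  imports "HOL-Algebra.Polynomials" "HOL-Algebra.Chinese_Remainder"
begin

definition nilset :: "('a, 'b) ring_scheme \<Rightarrow> 'a set" where
  "nilset R = {x \<in> carrier R. \<exists>n::nat. x [^]\<^bsub>R\<^esub> n = \<zero>\<^bsub>R\<^esub>}"

text \<open>Polynomials are coefficient lists (highest degree first),
  multiplied by the library's polynomial multiplication; the product is normalised, so
  it is the zero polynomial iff it is the empty list.\<close>
definition weak_armendariz :: "('a, 'b) ring_scheme \<Rightarrow> bool" where
  "weak_armendariz R \<longleftrightarrow> ring R \<and>
     (\<forall>p q. set p \<subseteq> carrier R \<longrightarrow> set q \<subseteq> carrier R \<longrightarrow>
        ring.poly_mult R p q = [] \<longrightarrow>
        (\<forall>a\<in>set p. \<forall>b\<in>set q. a \<otimes>\<^bsub>R\<^esub> b \<in> nilset R))"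

definition amalgamation ::
  "('a, 'c) ring_scheme \<Rightarrow> ('b, 'd) ring_scheme \<Rightarrow> ('a \<Rightarrow> 'b) \<Rightarrow> 'b set \<Rightarrow> ('a \<times> 'b) ring" where
  "amalgamation A B f J =
     (RDirProd A B)\<lparr>carrier := {(a, f a \<oplus>\<^bsub>B\<^esub> j) | a j. a \<in> carrier A \<and> j \<in> J}\<rparr>"

definition image_plus_ideal ::
  "('a, 'c) ring_scheme \<Rightarrow> ('b, 'd) ring_scheme \<Rightarrow> ('a \<Rightarrow> 'b) \<Rightarrow> 'b set \<Rightarrow> ('b, 'd) ring_scheme" where
  "image_plus_ideal A B f J =
     B\<lparr>carrier := {f a \<oplus>\<^bsub>B\<^esub> j | a j. a \<in> carrier A \<and> j \<in> J}\<rparr>"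

end

theory Submission
  imports Defs
begin

text \<open>The second projection maps \<open>A \<bowtie>\<^sup>f J\<close> onto \<open>f(A) + J\<close>; its kernel consists of the
  pairs \<open>(a, 0)\<close> with \<open>f a \<in> J\<close>. Weak Armendariz rings are reflected along ring homomorphisms
  with nil kernel: if \<open>pq = 0\<close>, the images of the coefficients satisfy the same relation, so the
  image of each product \<open>a b\<close> is nilpotent; then some power of \<open>a b\<close> lies in the kernel and is
  itself nilpotent. If \<open>f(A) \<inter> J = 0\<close> the projection is an isomorphism, which gives (i); if
  \<open>J\<close> is nil, then \<open>f a \<in> J\<close> is nilpotent, hence so is \<open>a\<close> by injectivity of \<open>f\<close>, which
  gives (ii).\<close>

lemma (in ring) zero_in_nilset: "\<zero> \<in> nilset R"
  unfolding nilset_def by (auto intro!: exI[of _ "1::nat"])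

lemma (in ring) nilset_if_nat_pow_in_nilset:
  assumes "x \<in> carrier R" and "x [^] (n::nat) \<in> nilset R"
  shows "x \<in> nilset R"
proof -
  obtain m :: nat where "(x [^] n) [^] m = \<zero>"
    using assms(2) unfolding nilset_def by blast
  then have "x [^] (n * m) = \<zero>"
    using assms(1) by (simp add: nat_pow_pow)
  then show ?thesis
    using assms(1) unfolding nilset_def by blast
qed

lemma weak_armendariz_pullback:
  assumes R: "ring R" and h: "h \<in> ring_hom R S" and S: "weak_armendariz S"
    and ker_nil: "\<And>x. x \<in> carrier R \<Longrightarrow> h x = \<zero>\<^bsub>S\<^esub> \<Longrightarrow> x \<in> nilset R"
  shows "weak_armendariz R"
proof -
  have S_ring: "ring S" and S_wa: "\<And>p q a b. set p \<subseteq> carrier S \<Longrightarrow> set q \<subseteq> carrier S \<Longrightarrow>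
      ring.poly_mult S p q = [] \<Longrightarrow> a \<in> set p \<Longrightarrow> b \<in> set q \<Longrightarrow> a \<otimes>\<^bsub>S\<^esub> b \<in> nilset S"
    using S unfolding weak_armendariz_def by blast+
  interpret H: ring_hom_ring R S h
    using R S_ring h by (simp add: ring_hom_ring.intro ring_hom_ring_axioms.intro)
  show ?thesis unfolding weak_armendariz_def
  proof (intro conjI R allI impI ballI)
    fix p q a b
    assume p: "set p \<subseteq> carrier R" and q: "set q \<subseteq> carrier R"
      and pq: "ring.poly_mult R p q = []" and a: "a \<in> set p" and b: "b \<in> set q"
    have ac: "a \<in> carrier R" and bc: "b \<in> carrier R" using p q a b by auto
    have "ring.poly_mult S (map h p) (map h q) = []"
      using H.poly_mult_hom'[OF p q] pq by simp
    moreover have "set (map h p) \<subseteq> carrier S" "set (map h q) \<subseteq> carrier S"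
      using p q by auto
    ultimately have "h a \<otimes>\<^bsub>S\<^esub> h b \<in> nilset S"
      using S_wa[of "map h p" "map h q" "h a" "h b"] a b by simp
    then obtain n :: nat where "h ((a \<otimes>\<^bsub>R\<^esub> b) [^]\<^bsub>R\<^esub> n) = \<zero>\<^bsub>S\<^esub>"
      using ac bc unfolding nilset_def by (auto simp: H.hom_nat_pow)
    then have "(a \<otimes>\<^bsub>R\<^esub> b) [^]\<^bsub>R\<^esub> n \<in> nilset R"
      using ac bc ker_nil by simp
    then show "a \<otimes>\<^bsub>R\<^esub> b \<in> nilset R"
      using ac bc H.R.nilset_if_nat_pow_in_nilset by simp
  qed
qed

lemma weak_armendariz_ring_iso:
  assumes "h \<in> ring_iso R S" and "ring S" and "weak_armendariz R"
  shows "weak_armendariz S"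
proof -
  have R: "ring R" using assms(3) unfolding weak_armendariz_def by blast
  have "inv_into (carrier R) h \<in> ring_iso S R"
    using ring_iso_set_sym[OF R assms(1)] .
  then have g: "inv_into (carrier R) h \<in> ring_hom S R" "bij_betw (inv_into (carrier R) h) (carrier S) (carrier R)"
    unfolding ring_iso_def by auto
  interpret G: ring_hom_ring S R "inv_into (carrier R) h"
    using assms(2) R g(1) by (simp add: ring_hom_ring.intro ring_hom_ring_axioms.intro)
  show ?thesis
  proof (rule weak_armendariz_pullback[OF assms(2) g(1) assms(3)])
    fix y assume "y \<in> carrier S" "inv_into (carrier R) h y = \<zero>\<^bsub>R\<^esub>"
    then have "y = \<zero>\<^bsub>S\<^esub>"
      using g(2) G.hom_zero by (metis G.R.zero_closed bij_betw_def inj_on_def)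
    then show "y \<in> nilset S" using G.R.zero_in_nilset by simp
  qed
qed

lemma RDirProd_simps:
  "\<one>\<^bsub>RDirProd R S\<^esub> = (\<one>\<^bsub>R\<^esub>, \<one>\<^bsub>S\<^esub>)"
  "\<zero>\<^bsub>RDirProd R S\<^esub> = (\<zero>\<^bsub>R\<^esub>, \<zero>\<^bsub>S\<^esub>)"
  "(a, b) \<otimes>\<^bsub>RDirProd R S\<^esub> (c, d) = (a \<otimes>\<^bsub>R\<^esub> c, b \<otimes>\<^bsub>S\<^esub> d)"
  "(a, b) \<oplus>\<^bsub>RDirProd R S\<^esub> (c, d) = (a \<oplus>\<^bsub>R\<^esub> c, b \<oplus>\<^bsub>S\<^esub> d)"
  by (simp_all add: RDirProd_def DirProd_def monoid.defs)

lemma RDirProd_a_inv: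
  assumes "ring R" "ring S" "a \<in> carrier R" "b \<in> carrier S"
  shows "\<ominus>\<^bsub>RDirProd R S\<^esub> (a, b) = (\<ominus>\<^bsub>R\<^esub> a, \<ominus>\<^bsub>S\<^esub> b)"
proof -
  interpret R: ring R by fact
  interpret S: ring S by fact
  interpret P: ring "RDirProd R S" using RDirProd_ring assms by blast
  show ?thesis
    using assms by (intro P.minus_equality) (auto simp: RDirProd_simps RDirProd_carrier R.l_neg S.l_neg)
qed

lemma RDirProd_nat_pow: "(a, b) [^]\<^bsub>RDirProd R S\<^esub> (n::nat) = (a [^]\<^bsub>R\<^esub> n, b [^]\<^bsub>S\<^esub> n)"
  by (induct n) (simp_all add: RDirProd_simps)

lemma nat_pow_carrier_update: "x [^]\<^bsub>R\<lparr>carrier := H\<rparr>\<^esub> (n::nat) = x [^]\<^bsub>R\<^esub> n"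
  by (induct n) simp_all

lemma carrier_amalgamation:
  "carrier (amalgamation A B f J) = {(a, f a \<oplus>\<^bsub>B\<^esub> j) | a j. a \<in> carrier A \<and> j \<in> J}"
  by (simp add: amalgamation_def)

lemma zero_image_plus_ideal: "\<zero>\<^bsub>image_plus_ideal A B f J\<^esub> = \<zero>\<^bsub>B\<^esub>"
  by (simp add: image_plus_ideal_def)

context
  fixes A :: "('a, 'c) ring_scheme" and B :: "('b, 'd) ring_scheme"
    and f :: "'a \<Rightarrow> 'b" and J :: "'b set"
  assumes A: "ring A" and B: "ring B" and f_hom: "f \<in> ring_hom A B" and J: "ideal J B"
begin

interpretation H: ring_hom_ring A B f
  using A B f_hom by (simp add: ring_hom_ring.intro ring_hom_ring_axioms.intro)

interpretation J: ideal J B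
  by (fact J)

lemma subring_amalgamation:
  "subring (carrier (amalgamation A B f J)) (RDirProd A B)"
proof -
  interpret P: ring "RDirProd A B" using RDirProd_ring A B by blast
  have Jc: "\<And>j. j \<in> J \<Longrightarrow> j \<in> carrier B" using J.a_subset by blast
  show ?thesis unfolding carrier_amalgamation
  proof (rule P.subringI)
    show "{(a, f a \<oplus>\<^bsub>B\<^esub> j) | a j. a \<in> carrier A \<and> j \<in> J} \<subseteq> carrier (RDirProd A B)"
      by (auto simp: RDirProd_carrier Jc)
    show "\<one>\<^bsub>RDirProd A B\<^esub> \<in> {(a, f a \<oplus>\<^bsub>B\<^esub> j) | a j. a \<in> carrier A \<and> j \<in> J}"
      by (auto simp: RDirProd_simps intro!: exI[of _ "\<one>\<^bsub>A\<^esub>"] exI[of _ "\<zero>\<^bsub>B\<^esub>"])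
  next
    fix x assume "x \<in> {(a, f a \<oplus>\<^bsub>B\<^esub> j) | a j. a \<in> carrier A \<and> j \<in> J}"
    then obtain a j where x: "x = (a, f a \<oplus>\<^bsub>B\<^esub> j)" and a: "a \<in> carrier A" and j: "j \<in> J" by blast
    have "\<ominus>\<^bsub>RDirProd A B\<^esub> x = (\<ominus>\<^bsub>A\<^esub> a, f (\<ominus>\<^bsub>A\<^esub> a) \<oplus>\<^bsub>B\<^esub> \<ominus>\<^bsub>B\<^esub> j)"
      using a j Jc by (simp add: x RDirProd_a_inv A B H.S.minus_add)
    then show "\<ominus>\<^bsub>RDirProd A B\<^esub> x \<in> {(a, f a \<oplus>\<^bsub>B\<^esub> j) | a j. a \<in> carrier A \<and> j \<in> J}"
      using a j by blast
  next
    fix x y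
    assume "x \<in> {(a, f a \<oplus>\<^bsub>B\<^esub> j) | a j. a \<in> carrier A \<and> j \<in> J}"
      and "y \<in> {(a, f a \<oplus>\<^bsub>B\<^esub> j) | a j. a \<in> carrier A \<and> j \<in> J}"
    then obtain a j a' j' where xy: "x = (a, f a \<oplus>\<^bsub>B\<^esub> j)" "y = (a', f a' \<oplus>\<^bsub>B\<^esub> j')"
      and a: "a \<in> carrier A" "a' \<in> carrier A" and j: "j \<in> J" "j' \<in> J" by blast
    have jc: "j \<in> carrier B" "j' \<in> carrier B" and fa: "f a \<in> carrier B" "f a' \<in> carrier B"
      using a j Jc by auto
    have "x \<otimes>\<^bsub>RDirProd A B\<^esub> y = (a \<otimes>\<^bsub>A\<^esub> a',
        f (a \<otimes>\<^bsub>A\<^esub> a') \<oplus>\<^bsub>B\<^esub> (f a \<otimes>\<^bsub>B\<^esub> j' \<oplus>\<^bsub>B\<^esub> j \<otimes>\<^bsub>B\<^esub> f a' \<oplus>\<^bsub>B\<^esub> j \<otimes>\<^bsub>B\<^esub> j'))"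
      using a jc fa by (simp add: xy RDirProd_simps H.S.l_distr H.S.r_distr H.S.a_ac)
    moreover have "f a \<otimes>\<^bsub>B\<^esub> j' \<oplus>\<^bsub>B\<^esub> j \<otimes>\<^bsub>B\<^esub> f a' \<oplus>\<^bsub>B\<^esub> j \<otimes>\<^bsub>B\<^esub> j' \<in> J"
      using j fa jc by (simp add: J.I_l_closed J.I_r_closed)
    ultimately show "x \<otimes>\<^bsub>RDirProd A B\<^esub> y \<in> {(a, f a \<oplus>\<^bsub>B\<^esub> j) | a j. a \<in> carrier A \<and> j \<in> J}"
      using a by blast
    have "x \<oplus>\<^bsub>RDirProd A B\<^esub> y = (a \<oplus>\<^bsub>A\<^esub> a', f (a \<oplus>\<^bsub>A\<^esub> a') \<oplus>\<^bsub>B\<^esub> (j \<oplus>\<^bsub>B\<^esub> j'))"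
      using a jc fa by (simp add: xy RDirProd_simps H.S.a_ac)
    then show "x \<oplus>\<^bsub>RDirProd A B\<^esub> y \<in> {(a, f a \<oplus>\<^bsub>B\<^esub> j) | a j. a \<in> carrier A \<and> j \<in> J}"
      using a j by blast
  qed
qed

lemma ring_amalgamation: "ring (amalgamation A B f J)"
  using ring.subring_is_ring[OF RDirProd_ring[OF A B] subring_amalgamation]
  by (simp add: amalgamation_def)

lemma snd_image_amalgamation:
  "snd ` carrier (amalgamation A B f J) = carrier (image_plus_ideal A B f J)"
  unfolding carrier_amalgamation image_plus_ideal_def by force

lemma snd_ring_hom_amalgamation:
  "snd \<in> ring_hom (amalgamation A B f J) (image_plus_ideal A B f J)"
proof (rule ring_hom_memI)
  show "snd x \<in> carrier (image_plus_ideal A B f J)" if "x \<in> carrier (amalgamation A B f J)" for x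
    using that snd_image_amalgamation by blast
  show "snd (x \<otimes>\<^bsub>amalgamation A B f J\<^esub> y) = snd x \<otimes>\<^bsub>image_plus_ideal A B f J\<^esub> snd y"
    and "snd (x \<oplus>\<^bsub>amalgamation A B f J\<^esub> y) = snd x \<oplus>\<^bsub>image_plus_ideal A B f J\<^esub> snd y" for x y
    by (cases x; cases y; simp add: amalgamation_def image_plus_ideal_def RDirProd_simps)+
qed (simp add: amalgamation_def image_plus_ideal_def RDirProd_simps)

lemma ring_image_plus_ideal: "ring (image_plus_ideal A B f J)"
proof -
  have "snd \<in> ring_hom (RDirProd A B) B"
    by (rule ring_hom_memI) (auto simp: RDirProd_carrier RDirProd_simps)
  then have "ring_hom_ring (RDirProd A B) B snd"
    using RDirProd_ring[OF A B] B by (simp add: ring_hom_ring.intro ring_hom_ring_axioms.intro)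
  then have "subring (snd ` carrier (amalgamation A B f J)) B"
    using subring_amalgamation by (rule ring_hom_ring.img_is_subring)
  then show ?thesis
    using ring.subring_is_ring[OF B] snd_image_amalgamation
    by (simp add: image_plus_ideal_def)
qed

lemma amalgamation_snd_eq_zero:
  assumes "x \<in> carrier (amalgamation A B f J)" and "snd x = \<zero>\<^bsub>B\<^esub>"
  obtains a where "x = (a, \<zero>\<^bsub>B\<^esub>)" and "a \<in> carrier A" and "f a \<in> J"
proof -
  obtain a j where x: "x = (a, f a \<oplus>\<^bsub>B\<^esub> j)" and a: "a \<in> carrier A" and j: "j \<in> J"
    using assms(1) unfolding carrier_amalgamation by blast
  have sum_zero: "f a \<oplus>\<^bsub>B\<^esub> j = \<zero>\<^bsub>B\<^esub>" using assms(2) x by simp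
  moreover have "j \<in> carrier B" using j J.a_subset by blast
  ultimately have "f a = \<ominus>\<^bsub>B\<^esub> j"
    using a by (simp add: H.S.minus_equality)
  then have "f a \<in> J" using j by simp
  moreover have "x = (a, \<zero>\<^bsub>B\<^esub>)" using x sum_zero by simp
  ultimately show thesis using that a by blast
qed

lemma ring_iso_snd_amalgamation:
  assumes inj: "inj_on f (carrier A)" and disjoint: "f ` carrier A \<inter> J = {\<zero>\<^bsub>B\<^esub>}"
  shows "snd \<in> ring_iso (amalgamation A B f J) (image_plus_ideal A B f J)"
proof -
  interpret P: ring_hom_ring "amalgamation A B f J" "image_plus_ideal A B f J" snd
    using ring_amalgamation ring_image_plus_ideal snd_ring_hom_amalgamation
    by (simp add: ring_hom_ring.intro ring_hom_ring_axioms.intro)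
  have "a_kernel (amalgamation A B f J) (image_plus_ideal A B f J) snd
      = {\<zero>\<^bsub>amalgamation A B f J\<^esub>}"
  proof (intro equalityI subsetI)
    fix x assume "x \<in> a_kernel (amalgamation A B f J) (image_plus_ideal A B f J) snd"
    then have "x \<in> carrier (amalgamation A B f J)" "snd x = \<zero>\<^bsub>B\<^esub>"
      unfolding a_kernel_def' zero_image_plus_ideal by simp_all
    then obtain a where x: "x = (a, \<zero>\<^bsub>B\<^esub>)" and a: "a \<in> carrier A" and fa: "f a \<in> J"
      by (rule amalgamation_snd_eq_zero)
    from a fa have "f a \<in> f ` carrier A \<inter> J" by (intro IntI imageI)
    then have "f a = f \<zero>\<^bsub>A\<^esub>" using disjoint by simp
    with inj a have "a = \<zero>\<^bsub>A\<^esub>"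
      by (simp add: inj_on_def)
    then show "x \<in> {\<zero>\<^bsub>amalgamation A B f J\<^esub>}"
      using x by (simp add: amalgamation_def RDirProd_simps)
  next
    fix x assume "x \<in> {\<zero>\<^bsub>amalgamation A B f J\<^esub>}"
    then show "x \<in> a_kernel (amalgamation A B f J) (image_plus_ideal A B f J) snd"
      using P.hom_zero P.R.zero_closed unfolding a_kernel_def' by simp
  qed
  then have "inj_on snd (carrier (amalgamation A B f J))"
    by (rule P.trivial_ker_imp_inj)
  then show ?thesis
    using snd_ring_hom_amalgamation snd_image_amalgamation
    by (simp add: ring_iso_def bij_betw_def)
qed

lemma amalgamation_snd_kernel_nil:
  assumes inj: "inj_on f (carrier A)" and nil: "J \<subseteq> nilset B"
    and x: "x \<in> carrier (amalgamation A B f J)" "snd x = \<zero>\<^bsub>B\<^esub>"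
  shows "x \<in> nilset (amalgamation A B f J)"
proof -
  obtain a where xa: "x = (a, \<zero>\<^bsub>B\<^esub>)" and a: "a \<in> carrier A" and fa: "f a \<in> J"
    using x by (rule amalgamation_snd_eq_zero)
  obtain n :: nat where "f a [^]\<^bsub>B\<^esub> n = \<zero>\<^bsub>B\<^esub>"
    using fa nil unfolding nilset_def by blast
  then have "f (a [^]\<^bsub>A\<^esub> n) = f \<zero>\<^bsub>A\<^esub>" using a by (simp add: H.hom_nat_pow)
  then have an: "a [^]\<^bsub>A\<^esub> n = \<zero>\<^bsub>A\<^esub>" using inj a by (simp add: inj_on_def)
  \<comment> \<open>exponent \<open>Suc n\<close>, since \<open>\<zero> [^] 0 = \<one>\<close> in the second component\<close>
  have "x [^]\<^bsub>amalgamation A B f J\<^esub> Suc n = (a [^]\<^bsub>A\<^esub> Suc n, \<zero>\<^bsub>B\<^esub> [^]\<^bsub>B\<^esub> Suc n)"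
    by (simp only: amalgamation_def nat_pow_carrier_update xa RDirProd_nat_pow)
  also have "\<dots> = \<zero>\<^bsub>amalgamation A B f J\<^esub>"
    using an a by (simp add: amalgamation_def RDirProd_simps)
  finally show ?thesis using x unfolding nilset_def by blast
qed

end

theorem theorem4p1:
  fixes A :: "('a, 'c) ring_scheme" and B :: "('b, 'd) ring_scheme"
    and f :: "'a \<Rightarrow> 'b" and J :: "'b set"
  assumes "ring A" and "ring B"
    and "f \<in> ring_hom A B" and "inj_on f (carrier A)"
    and "ideal J B" and "J \<noteq> carrier B"
  shows "(f ` carrier A \<inter> J = {\<zero>\<^bsub>B\<^esub>} \<longrightarrow>
           (weak_armendariz (amalgamation A B f J) \<longleftrightarrow>
            weak_armendariz (image_plus_ideal A B f J)))
       \<and> (J \<subseteq> nilset B \<and> weak_armendariz (image_plus_ideal A B f J) \<longrightarrow>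
           weak_armendariz (amalgamation A B f J))"
proof (intro conjI impI)
  note setting = assms(1,2,3,5)
  assume "f ` carrier A \<inter> J = {\<zero>\<^bsub>B\<^esub>}"
  then have iso: "snd \<in> ring_iso (amalgamation A B f J) (image_plus_ideal A B f J)"
    using ring_iso_snd_amalgamation[OF setting assms(4)] by blast
  show "weak_armendariz (amalgamation A B f J) \<longleftrightarrow> weak_armendariz (image_plus_ideal A B f J)"
    using weak_armendariz_ring_iso[OF iso ring_image_plus_ideal[OF setting]]
      weak_armendariz_ring_iso[OF ring_iso_set_sym[OF ring_amalgamation[OF setting] iso]
        ring_amalgamation[OF setting]]
    by blast
next
  note setting = assms(1,2,3,5)
  assume "J \<subseteq> nilset B \<and> weak_armendariz (image_plus_ideal A B f J)"
  then show "weak_armendariz (amalgamation A B f J)"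
    using weak_armendariz_pullback[OF ring_amalgamation[OF setting] snd_ring_hom_amalgamation[OF setting]]
      amalgamation_snd_kernel_nil[OF setting assms(4)]
    by (simp add: zero_image_plus_ideal)
qed

end
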